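(* Consider the repeated single-slot hybrid auction in which at each step $t$ each advertiser $j$ bids $(m_{jt},c_{jt})$, the auctioneer's index is $q_{jt}$, the effective bid is $R_{jt}=\max(m_{jt},c_{jt}q_{jt})$, the highest effective bid wins and pays (with $R_{-j}$ the highest competing effective bid) $R_{-j}$ per impression if $m_{jt}>c_{jt}q_{jt}$ and $R_{-j}/q_{jt}$ per click otherwise. Advertiser $j$ has per-click value $v_j$, and the advertiser and auctioneer share the same Bayes-updated prior $\mathcal{P}_{jt}=\mathcal{Q}_{jt}$ on $j$'s click-through rate, with mean $p_{jt}$; the auctioneer's index $q_{jt}$ is the Gittins index of $\mathcal{Q}_{jt}$ with discount factor $\gamma_a$. Each advertiser uses the bidding index strategy with discount factor $\gamma_b$: at each step it bids $(B_{jt},B_{jt}/p_{jt})$, where $B_{jt}=\mathcal{W}_{jt}\min(1,p_{jt}/q_{jt})$ and $\mathcal{W}_{jt}$ is the largest $W$ such that the following game has positive optimal expected $\gamma_b$-discounted value: starting from the current priors, at each step the advertiser may stop or continue, and if it continues it gains $v_jp_s-W\min(1,p_s/q_s)$ in expectation (with $p_s,q_s$ the current mean and auctioneer index), after which both priors are Bayes-updated with the click outcome. Let $\gamma\in[0,1)$ be a global discount factor, let $G_{jt}$ denote the Gittins index of $\mathcal{P}_{jt}$ with discount factor $\gamma$, and call socially optimal the allocation rule maximizing the infinite-horizon expected $\gamma$-discounted sum of $v_jp_{jt}$ over the advertisers $j$ receiving the impression at each step $t$, which gives the impression at each step to an advertiser with the highest $v_jG_{jt}$. Then the bidding index strategy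 implements the socially optimal solution (each advertiser's effective bid equals $v_jG_{jt}$) in each of the following two cases: (1) $\gamma_b=\gamma$ and $\gamma_a=0$; (2) $\gamma_b=0$ and $\gamma_a=\gamma$.
   Context: Gittins index of a prior $\mathcal{Q}$ with discount factor $\gamma$: for a coin whose head probability has prior $\mathcal{Q}$ (Bayes-updated after each toss), yielding reward $1$ on heads and charged $G$ per toss, with the option to retire at any time, it is the largest $G$ for which the optimal expected $\gamma$-discounted difference between rewards and charges is non-negative. It equals the mean when $\gamma=0$ and is at least the mean in general. *)

theory Defs
  imports "HOL-Probability.Probability"
begin

text \<open>Priors on the click-through rate are probability measures on the reals
  concentrated on [0,1].  A click outcome is a bool (True = click).\<close>

definition lik :: "bool \<Rightarrow> real \<Rightarrow> real" where
  "lik b \<theta> = (if b then \<theta> else 1 - \<theta>)"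

definition hlik :: "bool list \<Rightarrow> real \<Rightarrow> real" where
  "hlik h \<theta> = prod_list (map (\<lambda>b. lik b \<theta>) h)"

definition hprob :: "real measure \<Rightarrow> bool list \<Rightarrow> real" where
  "hprob Q h = (\<integral>\<theta>. hlik h \<theta> \<partial>Q)"

definition bayes :: "real measure \<Rightarrow> bool \<Rightarrow> real measure" where
  "bayes Q b = density Q (\<lambda>\<theta>. ennreal (lik b \<theta> / (\<integral>x. lik b x \<partial>Q)))"

definition posterior :: "real measure \<Rightarrow> bool list \<Rightarrow> real measure" where
  "posterior Q h = fold (\<lambda>b P. bayes P b) h Q"

definition ctr_mean :: "real measure \<Rightarrow> real" where
  "ctr_mean Q = (\<integral>\<theta>. \<theta> \<partial>Q)"

text \<open>A (history-dependent) stopping policy: sigma h says whether to continue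
  (play the step) after outcome history h. Step length(h) is played iff the policy
  continued at all prefixes of h.\<close>
definition plays :: "(bool list \<Rightarrow> bool) \<Rightarrow> bool list \<Rightarrow> bool" where
  "plays \<sigma> h = (\<forall>i\<le>length h. \<sigma> (take i h))"

definition policy_value ::
  "real \<Rightarrow> (real measure \<Rightarrow> real) \<Rightarrow> real measure \<Rightarrow> (bool list \<Rightarrow> bool) \<Rightarrow> real" where
  "policy_value \<gamma> r Q \<sigma> =
     (\<Sum>t. \<gamma> ^ t * (\<Sum>h\<in>{h::bool list. length h = t}.
        (if plays \<sigma> h then hprob Q h * r (posterior Q h) else 0)))"

text \<open>Optimal value with the option to stop at any time (including immediately).\<close>
definition opt_value :: "real \<Rightarrow> (real measure \<Rightarrow> real) \<Rightarrow> real measure \<Rightarrow> real" where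
  "opt_value \<gamma> r Q = (SUP \<sigma>. policy_value \<gamma> r Q \<sigma>)"

text \<open>Gittins index: largest charge G such that the optimal value of tossing the coin
  (first toss made, retirement possible at any later time) is non-negative.\<close>
definition gittins :: "real \<Rightarrow> real measure \<Rightarrow> real" where
  "gittins \<gamma> Q = Sup {G. (SUP \<sigma>\<in>{\<sigma>. \<sigma> []}. policy_value \<gamma> (\<lambda>P. ctr_mean P - G) Q \<sigma>) \<ge> 0}"

definition bidding_W :: "real \<Rightarrow> real \<Rightarrow> real \<Rightarrow> real measure \<Rightarrow> real" where
  "bidding_W \<gamma>a \<gamma>b v Q = Sup {W. opt_value \<gamma>b
      (\<lambda>P. v * ctr_mean P - W * min 1 (ctr_mean P / gittins \<gamma>a P)) Q > 0}"

definition bidding_index_bid :: "real \<Rightarrow> real \<Rightarrow> real \<Rightarrow> real measure \<Rightarrow> real \<times> real" where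
  "bidding_index_bid \<gamma>a \<gamma>b v Q =
     (let B = bidding_W \<gamma>a \<gamma>b v Q * min 1 (ctr_mean Q / gittins \<gamma>a Q)
      in (B, B / ctr_mean Q))"

definition effective_bid :: "real \<times> real \<Rightarrow> real \<Rightarrow> real" where
  "effective_bid mc q = max (fst mc) (snd mc * q)"

end

theory Submission
  imports Defs
begin

text \<open>The Gittins index of a prior is the supremum, over stopping rules that toss at least once,
  of expected discounted clicks per expected discounted toss.  If the auctioneer's index is the
  posterior mean (\<open>\<gamma>a = 0\<close>), the factor \<open>min 1 (p/q)\<close> equals 1 wherever a click can still occur,
  so the bidder's stopping game with charge \<open>W\<close> is \<open>v\<close> times the retirement game with charge
  \<open>W / v\<close>, and the ratio characterization gives \<open>W = v G\<close>.  If the bidder is myopic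
  (\<open>\<gamma>b = 0\<close>) only the current step counts, so \<open>W = v q\<close>.  In both cases the bid \<open>(W p/q, W/q)\<close>
  has effective value \<open>max (W p/q) W = W\<close>, because the Gittins index dominates the mean.\<close>

lemma cSup_eq_if_between_lessThan_atMost:
  fixes c :: real
  assumes "\<And>x. x \<in> S \<Longrightarrow> x \<le> c" and "\<And>x. x < c \<Longrightarrow> x \<in> S"
  shows "Sup S = c"
proof (rule cSup_eq)
  show "c \<le> y" if "\<And>x. x \<in> S \<Longrightarrow> x \<le> y" for y
    by (rule dense_le) (use assms(2) that in blast)
qed (use assms(1) in blast)

section \<open>Likelihoods of click histories\<close>

lemma hlik_Nil [simp]: "hlik [] \<theta> = 1"
  by (simp add: hlik_def)

lemma hlik_Cons [simp]: "hlik (b # h) \<theta> = lik b \<theta> * hlik h \<theta>"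
  by (simp add: hlik_def)

lemma hlik_append: "hlik (h @ h') \<theta> = hlik h \<theta> * hlik h' \<theta>"
  by (simp add: hlik_def)

lemma lik_bounds: "0 \<le> \<theta> \<Longrightarrow> \<theta> \<le> 1 \<Longrightarrow> 0 \<le> lik b \<theta> \<and> lik b \<theta> \<le> 1"
  by (auto simp: lik_def)

lemma hlik_bounds: "0 \<le> \<theta> \<Longrightarrow> \<theta> \<le> 1 \<Longrightarrow> 0 \<le> hlik h \<theta> \<and> hlik h \<theta> \<le> 1"
proof (induction h)
  case (Cons b h)
  then show ?case
    using lik_bounds[of \<theta> b] by (auto intro: mult_le_one)
qed simp

lemma borel_measurable_lik [measurable]: "lik b \<in> borel_measurable borel"
proof -
  have "lik b = (\<lambda>\<theta>. if b then \<theta> else 1 - \<theta>)"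
    by (auto simp: lik_def fun_eq_iff)
  then show ?thesis by simp
qed

lemma borel_measurable_hlik [measurable]: "hlik h \<in> borel_measurable borel"
proof (induction h)
  case Nil
  have "hlik [] = (\<lambda>_. 1)" by (auto simp: fun_eq_iff)
  then show ?case by simp
next
  case (Cons b h)
  have "hlik (b # h) = (\<lambda>\<theta>. lik b \<theta> * hlik h \<theta>)" by (auto simp: fun_eq_iff)
  then show ?case using Cons by simp
qed

lemma sum_length_Suc:
  "(\<Sum>h\<in>{h::bool list. length h = Suc t}. F h) =
   (\<Sum>h\<in>{h::bool list. length h = t}. F (True # h) + F (False # h))"
proof -
  let ?L = "{h::bool list. length h = t}"
  have split: "{h::bool list. length h = Suc t} = Cons True ` ?L \<union> Cons False ` ?L"
  proof (intro set_eqI iffI)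
    fix h :: "bool list" assume "h \<in> {h. length h = Suc t}"
    then obtain b xs where "h = b # xs" "length xs = t" by (auto simp: length_Suc_conv)
    then show "h \<in> Cons True ` ?L \<union> Cons False ` ?L" by (cases b) auto
  qed auto
  have "(\<Sum>h\<in>{h::bool list. length h = Suc t}. F h) = sum F (Cons True ` ?L) + sum F (Cons False ` ?L)"
    unfolding split by (rule sum.union_disjoint) (auto simp: finite_list_length)
  also have "\<dots> = (\<Sum>h\<in>?L. F (True # h)) + (\<Sum>h\<in>?L. F (False # h))"
    by (simp add: sum.reindex)
  finally show ?thesis by (simp add: sum.distrib)
qed

lemma length_eq_0_set: "{h::bool list. length h = 0} = {[]}"
  by auto

lemma sum_hlik_length: "(\<Sum>h\<in>{h::bool list. length h = t}. hlik h \<theta>) = 1"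
proof (induction t)
  case (Suc t)
  then show ?case
    by (simp add: sum_length_Suc lik_def algebra_simps)
qed (simp add: length_eq_0_set)

lemma posterior_snoc: "posterior Q (h @ [b]) = bayes (posterior Q h) b"
  by (simp add: posterior_def)

lemma plays_Nil [simp]: "plays \<sigma> [] \<longleftrightarrow> \<sigma> []"
  by (simp add: plays_def)

lemma plays_imp_Nil: "plays \<sigma> h \<Longrightarrow> \<sigma> []"
  unfolding plays_def by (metis le0 take_0)

lemma plays_stop_after_first_iff: "plays (\<lambda>h. h = []) h \<longleftrightarrow> h = []"
  unfolding plays_def by (metis order_refl take_all take_eq_Nil)

lemma plays_restrict:
  assumes prefix_closed: "\<And>h i. P h \<Longrightarrow> P (take i h)"
  shows "plays (\<lambda>h. \<sigma> h \<and> P h) h \<longleftrightarrow> plays \<sigma> h \<and> P h"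
  unfolding plays_def by (metis order_refl take_all prefix_closed)

section \<open>Discounted values of stopping policies\<close>

definition stage_sum :: "(bool list \<Rightarrow> bool) \<Rightarrow> (bool list \<Rightarrow> real) \<Rightarrow> nat \<Rightarrow> real" where
  "stage_sum \<sigma> x t = (\<Sum>h\<in>{h::bool list. length h = t}. if plays \<sigma> h then x h else 0)"

definition discounted_value :: "real \<Rightarrow> (bool list \<Rightarrow> bool) \<Rightarrow> (bool list \<Rightarrow> real) \<Rightarrow> real" where
  "discounted_value g \<sigma> x = (\<Sum>t. g ^ t * stage_sum \<sigma> x t)"

definition bounded_stages :: "(bool list \<Rightarrow> real) \<Rightarrow> bool" where
  "bounded_stages x \<longleftrightarrow> (\<exists>K. \<forall>\<sigma> t. \<bar>stage_sum \<sigma> x t\<bar> \<le> K)"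

lemma policy_value_eq_discounted_value:
  "policy_value g r Q \<sigma> = discounted_value g \<sigma> (\<lambda>h. hprob Q h * r (posterior Q h))"
  by (simp add: policy_value_def discounted_value_def stage_sum_def)

lemma discounted_value_not_started:
  assumes "\<not> \<sigma> []"
  shows "discounted_value g \<sigma> x = 0"
proof -
  have "\<not> plays \<sigma> h" for h
    using assms plays_imp_Nil by blast
  then show ?thesis
    by (simp add: discounted_value_def stage_sum_def)
qed

lemma discounted_value_stop_after_first: "discounted_value g (\<lambda>h. h = []) x = x []"
proof -
  have "stage_sum (\<lambda>h. h = []) x t = (if t = 0 then x [] else 0)" for t
    by (auto simp: stage_sum_def plays_stop_after_first_iff length_eq_0_set intro: sum.neutral)
  then have "discounted_value g (\<lambda>h. h = []) x = (\<Sum>t\<in>{0}. g ^ t * stage_sum (\<lambda>h. h = []) x t)"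
    unfolding discounted_value_def by (intro suminf_finite) auto
  then show ?thesis by (simp add: stage_sum_def length_eq_0_set plays_stop_after_first_iff)
qed

lemma stage_sum_diff:
  "stage_sum \<sigma> (\<lambda>h. \<alpha> * x h - \<beta> * y h) t = \<alpha> * stage_sum \<sigma> x t - \<beta> * stage_sum \<sigma> y t"
  unfolding stage_sum_def sum_distrib_left sum_subtractf[symmetric] by (rule sum.cong) auto

lemma bounded_stages_diff:
  assumes "bounded_stages x" "bounded_stages y"
  shows "bounded_stages (\<lambda>h. \<alpha> * x h - \<beta> * y h)"
proof -
  obtain Kx Ky where Kx: "\<And>\<sigma> t. \<bar>stage_sum \<sigma> x t\<bar> \<le> Kx" and Ky: "\<And>\<sigma> t. \<bar>stage_sum \<sigma> y t\<bar> \<le> Ky"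
    using assms unfolding bounded_stages_def by blast
  have "\<bar>\<alpha> * stage_sum \<sigma> x t - \<beta> * stage_sum \<sigma> y t\<bar> \<le> \<bar>\<alpha>\<bar> * Kx + \<bar>\<beta>\<bar> * Ky" for \<sigma> t
  proof -
    have "\<bar>\<alpha> * stage_sum \<sigma> x t - \<beta> * stage_sum \<sigma> y t\<bar> \<le>
          \<bar>\<alpha>\<bar> * \<bar>stage_sum \<sigma> x t\<bar> + \<bar>\<beta>\<bar> * \<bar>stage_sum \<sigma> y t\<bar>"
      using abs_triangle_ineq4[of "\<alpha> * stage_sum \<sigma> x t" "\<beta> * stage_sum \<sigma> y t"] by (simp add: abs_mult)
    also have "\<dots> \<le> \<bar>\<alpha>\<bar> * Kx + \<bar>\<beta>\<bar> * Ky"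
      by (intro add_mono mult_left_mono Kx Ky abs_ge_zero)
    finally show ?thesis .
  qed
  then show ?thesis
    unfolding bounded_stages_def stage_sum_diff by blast
qed

lemma summable_discounted_stages:
  assumes g: "0 \<le> g" "g < 1" and x: "bounded_stages x"
  shows "summable (\<lambda>t. g ^ t * stage_sum \<sigma> x t)"
proof -
  obtain K where K: "\<And>t. \<bar>stage_sum \<sigma> x t\<bar> \<le> K"
    using x unfolding bounded_stages_def by blast
  have bound: "\<bar>g ^ t * stage_sum \<sigma> x t\<bar> \<le> K * g ^ t" for t
    using mult_right_mono[OF K[of t] zero_le_power[OF g(1)]] g by (simp add: abs_mult mult.commute)
  have "summable (\<lambda>t. K * g ^ t)"
    using g by (intro summable_mult summable_geometric) auto
  then have "summable (\<lambda>t. \<bar>g ^ t * stage_sum \<sigma> x t\<bar>)"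
    by (rule summable_comparison_test') (simp add: bound)
  then show ?thesis
    by (rule summable_rabs_cancel)
qed

lemma discounted_value_diff:
  assumes g: "0 \<le> g" "g < 1" and x: "bounded_stages x" and y: "bounded_stages y"
  shows "discounted_value g \<sigma> (\<lambda>h. \<alpha> * x h - \<beta> * y h) =
         \<alpha> * discounted_value g \<sigma> x - \<beta> * discounted_value g \<sigma> y"
proof -
  have "discounted_value g \<sigma> (\<lambda>h. \<alpha> * x h - \<beta> * y h) =
        (\<Sum>t. \<alpha> * (g ^ t * stage_sum \<sigma> x t) - \<beta> * (g ^ t * stage_sum \<sigma> y t))"
    by (simp add: discounted_value_def stage_sum_diff algebra_simps)
  also have "\<dots> = (\<Sum>t. \<alpha> * (g ^ t * stage_sum \<sigma> x t)) - (\<Sum>t. \<beta> * (g ^ t * stage_sum \<sigma> y t))"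
    by (rule suminf_diff[symmetric])
       (intro summable_mult summable_discounted_stages[OF g x] summable_discounted_stages[OF g y])+
  also have "\<dots> = \<alpha> * discounted_value g \<sigma> x - \<beta> * discounted_value g \<sigma> y"
    unfolding discounted_value_def
    by (simp add: suminf_mult summable_discounted_stages[OF g x] summable_discounted_stages[OF g y])
  finally show ?thesis .
qed

lemma discounted_value_mono:
  assumes g: "0 \<le> g" "g < 1" and x: "bounded_stages x" and y: "bounded_stages y"
    and le: "\<And>h. x h \<le> y h"
  shows "discounted_value g \<sigma> x \<le> discounted_value g \<sigma> y"
  unfolding discounted_value_def
proof (rule suminf_le[OF _ summable_discounted_stages[OF g x] summable_discounted_stages[OF g y]])
  fix t
  have "stage_sum \<sigma> x t \<le> stage_sum \<sigma> y t"
    unfolding stage_sum_def by (rule sum_mono) (simp add: le)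
  then show "g ^ t * stage_sum \<sigma> x t \<le> g ^ t * stage_sum \<sigma> y t"
    using g by (intro mult_left_mono) auto
qed

lemma discounted_value_ge_first:
  assumes g: "0 \<le> g" "g < 1" and x: "bounded_stages x" and nonneg: "\<And>h. 0 \<le> x h"
    and start: "\<sigma> []"
  shows "x [] \<le> discounted_value g \<sigma> x"
proof -
  have "0 \<le> g ^ t * stage_sum \<sigma> x t" for t
    using g unfolding stage_sum_def by (intro mult_nonneg_nonneg sum_nonneg) (auto simp: nonneg)
  then have "(\<Sum>t\<in>{0}. g ^ t * stage_sum \<sigma> x t) \<le> discounted_value g \<sigma> x"
    unfolding discounted_value_def by (intro sum_le_suminf summable_discounted_stages[OF g x]) auto
  then show ?thesis
    using start by (simp add: stage_sum_def length_eq_0_set)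
qed

lemma bdd_above_discounted_value_diff:
  assumes g: "0 \<le> g" "g < 1" and x: "bounded_stages x" and y: "bounded_stages y"
  shows "bdd_above ((\<lambda>\<sigma>. \<alpha> * discounted_value g \<sigma> x - \<beta> * discounted_value g \<sigma> y) ` X)"
proof -
  let ?z = "\<lambda>h. \<alpha> * x h - \<beta> * y h"
  obtain K where K: "\<And>\<sigma> t. \<bar>stage_sum \<sigma> ?z t\<bar> \<le> K"
    using bounded_stages_diff[OF x y] unfolding bounded_stages_def by blast
  have "discounted_value g \<sigma> ?z \<le> K / (1 - g)" for \<sigma>
  proof -
    have geometric: "(\<lambda>t. K * g ^ t) sums (K / (1 - g))"
      using sums_mult[OF geometric_sums, of g K] g by simp
    have "g ^ t * stage_sum \<sigma> ?z t \<le> K * g ^ t" for t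
      using mult_right_mono[OF order_trans[OF abs_ge_self K[of \<sigma> t]] zero_le_power[OF g(1)]]
      by (simp add: mult.commute)
    then have "discounted_value g \<sigma> ?z \<le> (\<Sum>t. K * g ^ t)"
      unfolding discounted_value_def
      by (rule suminf_le[OF _ summable_discounted_stages[OF g bounded_stages_diff[OF x y]]
                            sums_summable[OF geometric]])
    then show ?thesis
      using sums_unique[OF geometric] by simp
  qed
  then show ?thesis
    by (intro bdd_aboveI2[where M = "K / (1 - g)"]) (simp add: discounted_value_diff[OF g x y])
qed

lemma policy_value_zero_discount:
  "policy_value 0 r P \<sigma> = (if \<sigma> [] then hprob P [] * r P else 0)"
proof -
  have "policy_value 0 r P \<sigma> = (\<Sum>t\<in>{0}. (0::real) ^ t * stage_sum \<sigma> (\<lambda>h. hprob P h * r (posterior P h)) t)"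
    unfolding policy_value_eq_discounted_value discounted_value_def by (rule suminf_finite) auto
  then show ?thesis
    by (simp add: stage_sum_def length_eq_0_set posterior_def)
qed

lemma gittins_zero_discount:
  assumes "hprob P [] = 1"
  shows "gittins 0 P = ctr_mean P"
proof -
  have "{\<sigma>::bool list \<Rightarrow> bool. \<sigma> []} \<noteq> {}" by auto
  then have "{G. (SUP \<sigma>\<in>{\<sigma>::bool list \<Rightarrow> bool. \<sigma> []}. ctr_mean P - G) \<ge> 0} = {..ctr_mean P}"
    by auto
  then show ?thesis
    unfolding gittins_def by (simp add: policy_value_zero_discount assms)
qed

lemma opt_value_zero_discount:
  assumes "hprob P [] = 1"
  shows "opt_value 0 r P = max (r P) 0"
proof -
  have "range (\<lambda>\<sigma>::bool list \<Rightarrow> bool. if \<sigma> [] then r P else 0) = {r P, 0}"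
    by (auto intro: range_eqI[of _ _ "\<lambda>_. True"] range_eqI[of _ _ "\<lambda>_. False"])
  then show ?thesis
    unfolding opt_value_def policy_value_zero_discount assms mult_1_left by (simp add: cSup_eq_Max)
qed

lemma bidding_W_myopic_bidder:
  assumes "hprob Q [] = 1" and p: "0 < ctr_mean Q" and pq: "ctr_mean Q \<le> gittins \<gamma>a Q"
  shows "bidding_W \<gamma>a 0 v Q = v * gittins \<gamma>a Q"
proof -
  define q where "q = gittins \<gamma>a Q"
  have q_pos: "0 < q"
    using p pq by (simp add: q_def)
  have min_eq: "min 1 (ctr_mean Q / q) = ctr_mean Q / q"
    using p pq by (simp add: q_def min_def divide_le_eq_1)
  have "0 < opt_value 0 (\<lambda>P. v * ctr_mean P - W * min 1 (ctr_mean P / gittins \<gamma>a P)) Q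
        \<longleftrightarrow> 0 < ctr_mean Q * (v - W / q)" for W
    by (simp add: opt_value_zero_discount assms(1) q_def[symmetric] min_eq algebra_simps less_max_iff_disj)
  also have "0 < ctr_mean Q * (v - W / q) \<longleftrightarrow> W < v * q" for W
    using p q_pos by (simp add: zero_less_mult_iff divide_less_eq)
  finally show ?thesis
    unfolding bidding_W_def q_def[symmetric] by (simp flip: lessThan_def)
qed

lemma effective_bid_bidding_index_bid:
  assumes p: "0 < ctr_mean Q" and pq: "ctr_mean Q \<le> gittins \<gamma>a Q"
    and W: "0 \<le> bidding_W \<gamma>a \<gamma>b v Q"
  shows "effective_bid (bidding_index_bid \<gamma>a \<gamma>b v Q) (gittins \<gamma>a Q) = bidding_W \<gamma>a \<gamma>b v Q"
proof -
  define q where "q = gittins \<gamma>a Q"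
  have "ctr_mean Q / q \<le> 1" "0 < q"
    using p pq by (simp_all add: q_def)
  then have "bidding_W \<gamma>a \<gamma>b v Q * (ctr_mean Q / q) \<le> bidding_W \<gamma>a \<gamma>b v Q"
    using W by (simp add: mult_left_le del: times_divide_eq_right)
  then show ?thesis
    using p \<open>0 < q\<close> \<open>ctr_mean Q / q \<le> 1\<close>
    unfolding bidding_index_bid_def effective_bid_def q_def[symmetric]
    by (simp add: Let_def min_def max_def)
qed

lemma effective_bid_bidding_index_bid_zero_mean:
  "ctr_mean Q = 0 \<Longrightarrow> effective_bid (bidding_index_bid \<gamma>a \<gamma>b v Q) q = 0"
  by (simp add: bidding_index_bid_def effective_bid_def Let_def)

section \<open>Priors on the unit interval\<close>

locale ctr_prior = prob_space Q for Q :: "real measure" +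
  assumes sets_eq_borel: "sets Q = sets borel"
    and AE_unit_interval: "AE \<theta> in Q. 0 \<le> \<theta> \<and> \<theta> \<le> 1"
begin

lemma borel_measurable_eq: "borel_measurable Q = borel_measurable borel"
  using measurable_cong_sets[OF sets_eq_borel refl] .

lemma AE_hlik_bounds: "AE \<theta> in Q. 0 \<le> hlik h \<theta> \<and> hlik h \<theta> \<le> 1"
  using AE_unit_interval by (rule eventually_mono) (simp add: hlik_bounds)

lemma integrable_hlik: "integrable Q (hlik h)"
proof (rule integrable_const_bound[where B = 1])
  show "AE \<theta> in Q. norm (hlik h \<theta>) \<le> 1"
    using AE_hlik_bounds[of h] by eventually_elim auto
qed (simp add: borel_measurable_eq)

lemma integrable_hlik_mult: "integrable Q (\<lambda>\<theta>. hlik h \<theta> * \<theta>)"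
proof (rule integrable_const_bound[where B = 1])
  show "AE \<theta> in Q. norm (hlik h \<theta> * \<theta>) \<le> 1"
    using AE_hlik_bounds[of h] AE_unit_interval
    by eventually_elim (auto simp: abs_mult intro: mult_le_one)
qed (simp add: borel_measurable_eq)

definition click_mass :: "bool list \<Rightarrow> real" where
  "click_mass h = hprob Q (h @ [True])"

lemma click_mass_eq_integral: "click_mass h = (\<integral>\<theta>. hlik h \<theta> * \<theta> \<partial>Q)"
  by (simp add: click_mass_def hprob_def hlik_append lik_def)

lemma ctr_mean_eq_click_mass: "ctr_mean Q = click_mass []"
  by (simp add: click_mass_eq_integral ctr_mean_def)

lemma hprob_Nil: "hprob Q [] = 1"
  by (simp add: hprob_def prob_space)

lemma hprob_nonneg: "0 \<le> hprob Q h"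
proof -
  have "AE \<theta> in Q. 0 \<le> hlik h \<theta>"
    using AE_hlik_bounds[of h] by eventually_elim auto
  then show ?thesis
    unfolding hprob_def by (rule integral_nonneg_AE)
qed

lemma click_mass_nonneg: "0 \<le> click_mass h"
proof -
  have "AE \<theta> in Q. 0 \<le> hlik h \<theta> * \<theta>"
    using AE_hlik_bounds[of h] AE_unit_interval by eventually_elim simp
  then show ?thesis
    unfolding click_mass_eq_integral by (rule integral_nonneg_AE)
qed

lemma click_mass_le_hprob: "click_mass h \<le> hprob Q h"
  unfolding click_mass_eq_integral hprob_def
proof (intro integral_mono_AE integrable_hlik integrable_hlik_mult)
  show "AE \<theta> in Q. hlik h \<theta> * \<theta> \<le> hlik h \<theta>"
    using AE_hlik_bounds[of h] AE_unit_interval by eventually_elim (simp add: mult_left_le)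
qed

lemma click_mass_append_le: "click_mass (h @ h') \<le> click_mass h"
  unfolding click_mass_eq_integral
proof (intro integral_mono_AE integrable_hlik_mult)
  show "AE \<theta> in Q. hlik (h @ h') \<theta> * \<theta> \<le> hlik h \<theta> * \<theta>"
    using AE_hlik_bounds[of h] AE_hlik_bounds[of h'] AE_unit_interval
  proof eventually_elim
    case (elim \<theta>)
    then have "hlik h \<theta> * hlik h' \<theta> \<le> hlik h \<theta>"
      by (intro mult_left_le) auto
    with elim show ?case
      by (simp add: hlik_append mult_right_mono)
  qed
qed

lemma hprob_snoc_le: "hprob Q (h @ [b]) \<le> hprob Q h"
  unfolding hprob_def
proof (intro integral_mono_AE integrable_hlik)
  show "AE \<theta> in Q. hlik (h @ [b]) \<theta> \<le> hlik h \<theta>"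
    using AE_hlik_bounds[of h] AE_unit_interval
  proof eventually_elim
    case (elim \<theta>)
    then show ?case
      using lik_bounds[of \<theta> b] by (simp add: hlik_append mult_left_le)
  qed
qed

lemma sum_hprob_length: "(\<Sum>h\<in>{h::bool list. length h = t}. hprob Q h) = 1"
  unfolding hprob_def
  by (simp add: Bochner_Integration.integral_sum[symmetric] integrable_hlik sum_hlik_length prob_space)

lemma posterior_eq_density:
  "0 < hprob Q h \<Longrightarrow> posterior Q h = density Q (\<lambda>\<theta>. ennreal (hlik h \<theta> / hprob Q h))"
proof (induction h rule: rev_induct)
  case Nil
  then show ?case by (simp add: posterior_def hprob_Nil density_1)
next
  case (snoc b h)
  have pos: "0 < hprob Q h"
    using snoc.prems hprob_snoc_le[of h b] by linarith
  define f where "f \<theta> = hlik h \<theta> / hprob Q h" for \<theta>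
  define c where "c = hprob Q (h @ [b]) / hprob Q h"
  have f_meas: "f \<in> borel_measurable borel"
    unfolding f_def[abs_def] by simp
  have f_nonneg: "AE \<theta> in Q. 0 \<le> f \<theta>"
    using AE_hlik_bounds[of h] by eventually_elim (auto simp: f_def hprob_nonneg)
  have "(\<integral>\<theta>. lik b \<theta> \<partial>density Q (\<lambda>\<theta>. ennreal (f \<theta>))) = (\<integral>\<theta>. f \<theta> * lik b \<theta> \<partial>Q)"
    using integral_density[of "lik b" Q f] f_nonneg f_meas by (simp add: borel_measurable_eq)
  also have "\<dots> = c"
    by (simp add: f_def c_def hprob_def hlik_append)
  finally have normalizer: "(\<integral>\<theta>. lik b \<theta> \<partial>density Q (\<lambda>\<theta>. ennreal (f \<theta>))) = c" .
  have "posterior Q (h @ [b]) = density (density Q (\<lambda>\<theta>. ennreal (f \<theta>))) (\<lambda>\<theta>. ennreal (lik b \<theta> / c))"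
    unfolding posterior_snoc snoc.IH[OF pos] bayes_def f_def[symmetric] normalizer ..
  also have "\<dots> = density Q (\<lambda>\<theta>. ennreal (f \<theta>) * ennreal (lik b \<theta> / c))"
    by (rule density_density_eq) (simp_all add: borel_measurable_eq f_def)
  also have "\<dots> = density Q (\<lambda>\<theta>. ennreal (hlik (h @ [b]) \<theta> / hprob Q (h @ [b])))"
  proof (rule density_cong)
    show "AE \<theta> in Q. ennreal (f \<theta>) * ennreal (lik b \<theta> / c) = ennreal (hlik (h @ [b]) \<theta> / hprob Q (h @ [b]))"
      using f_nonneg AE_unit_interval
    proof eventually_elim
      case (elim \<theta>)
      have "0 \<le> lik b \<theta> / c"
        using lik_bounds[of \<theta> b] hprob_nonneg[of "h @ [b]"] pos elim by (simp add: c_def)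
      then have "ennreal (f \<theta>) * ennreal (lik b \<theta> / c) = ennreal (f \<theta> * (lik b \<theta> / c))"
        using elim by (intro ennreal_mult[symmetric]) auto
      also have "f \<theta> * (lik b \<theta> / c) = hlik (h @ [b]) \<theta> / hprob Q (h @ [b])"
        using pos by (simp add: f_def c_def hlik_append)
      finally show ?case .
    qed
  qed (simp_all add: borel_measurable_eq f_def c_def)
  finally show ?case .
qed

lemma
  assumes "0 < hprob Q h"
  shows hprob_posterior_Nil: "hprob (posterior Q h) [] = 1"
    and ctr_mean_posterior: "ctr_mean (posterior Q h) = click_mass h / hprob Q h"
proof -
  define c where "c = hprob Q h"
  have posterior: "posterior Q h = density Q (\<lambda>\<theta>. ennreal (hlik h \<theta> / c))"
    unfolding c_def by (rule posterior_eq_density[OF assms])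
  have nonneg: "AE \<theta> in Q. 0 \<le> hlik h \<theta> / c"
    using AE_hlik_bounds[of h] by eventually_elim (auto simp: c_def hprob_nonneg)
  have "hprob (posterior Q h) [] = (\<integral>\<theta>. hlik h \<theta> / c \<partial>Q)"
    unfolding posterior hprob_def[of _ "[]"]
    by (subst integral_density) (auto simp: borel_measurable_eq nonneg)
  then show "hprob (posterior Q h) [] = 1"
    using assms by (simp add: c_def hprob_def)
  have "ctr_mean (posterior Q h) = (\<integral>\<theta>. hlik h \<theta> / c * \<theta> \<partial>Q)"
    unfolding posterior ctr_mean_def
    by (subst integral_density) (auto simp: borel_measurable_eq nonneg)
  then show "ctr_mean (posterior Q h) = click_mass h / hprob Q h"
    by (simp add: click_mass_eq_integral c_def)
qed

lemma bounded_stages_if_le_hprob: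
  assumes "\<And>h. \<bar>x h\<bar> \<le> K * hprob Q h"
  shows "bounded_stages x"
proof -
  have "\<bar>x []\<bar> \<le> K"
    using assms[of "[]"] by (simp add: hprob_Nil)
  then have K: "0 \<le> K"
    by (rule order_trans[OF abs_ge_zero])
  have "\<bar>stage_sum \<sigma> x t\<bar> \<le> K" for \<sigma> t
  proof -
    have "\<bar>stage_sum \<sigma> x t\<bar> \<le> (\<Sum>h\<in>{h::bool list. length h = t}. K * hprob Q h)"
      unfolding stage_sum_def
      by (rule order_trans[OF sum_abs sum_mono]) (simp add: assms K hprob_nonneg)
    then show ?thesis
      by (simp add: sum_distrib_left[symmetric] sum_hprob_length)
  qed
  then show ?thesis
    unfolding bounded_stages_def by blast
qed

lemma bounded_stages_hprob: "bounded_stages (hprob Q)"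
  by (rule bounded_stages_if_le_hprob[where K = 1]) (simp add: hprob_nonneg)

lemma bounded_stages_click_mass: "bounded_stages click_mass"
  by (rule bounded_stages_if_le_hprob[where K = 1]) (simp add: click_mass_nonneg click_mass_le_hprob)

lemma policy_value_retirement_game:
  assumes g: "0 \<le> g" "g < 1"
  shows "policy_value g (\<lambda>P. ctr_mean P - G) Q \<sigma> =
         discounted_value g \<sigma> click_mass - G * discounted_value g \<sigma> (hprob Q)"
proof -
  have "hprob Q h * (ctr_mean (posterior Q h) - G) = 1 * click_mass h - G * hprob Q h" for h
  proof (cases "hprob Q h = 0")
    case True
    then show ?thesis
      using click_mass_le_hprob[of h] click_mass_nonneg[of h] by simp
  next
    case False
    then show ?thesis
      using hprob_nonneg[of h] by (simp add: ctr_mean_posterior field_simps)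
  qed
  then show ?thesis
    using discounted_value_diff[OF g bounded_stages_click_mass bounded_stages_hprob, of \<sigma> 1 G]
    by (simp add: policy_value_eq_discounted_value)
qed

section \<open>The Gittins index as a supremum of ratios\<close>

lemma discounted_value_hprob_ge_1:
  "0 \<le> g \<Longrightarrow> g < 1 \<Longrightarrow> \<sigma> [] \<Longrightarrow> 1 \<le> discounted_value g \<sigma> (hprob Q)"
  using discounted_value_ge_first[OF _ _ bounded_stages_hprob hprob_nonneg] hprob_Nil by simp

lemma discounted_click_mass_le_hprob:
  "0 \<le> g \<Longrightarrow> g < 1 \<Longrightarrow> discounted_value g \<sigma> click_mass \<le> discounted_value g \<sigma> (hprob Q)"
  by (rule discounted_value_mono[OF _ _ bounded_stages_click_mass bounded_stages_hprob click_mass_le_hprob])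

lemma bdd_above_click_ratio:
  assumes g: "0 \<le> g" "g < 1"
  shows "bdd_above ((\<lambda>\<sigma>. discounted_value g \<sigma> click_mass / discounted_value g \<sigma> (hprob Q)) ` {\<sigma>. \<sigma> []})"
proof (rule bdd_aboveI2[where M = 1])
  fix \<sigma> :: "bool list \<Rightarrow> bool" assume "\<sigma> \<in> {\<sigma>. \<sigma> []}"
  then show "discounted_value g \<sigma> click_mass / discounted_value g \<sigma> (hprob Q) \<le> 1"
    using discounted_value_hprob_ge_1[OF g, of \<sigma>] discounted_click_mass_le_hprob[OF g, of \<sigma>]
    by (simp add: divide_le_eq_1)
qed

theorem gittins_eq_SUP_click_ratio:
  assumes g: "0 \<le> g" "g < 1"
  shows "gittins g Q =
         (SUP \<sigma>\<in>{\<sigma>. \<sigma> []}. discounted_value g \<sigma> click_mass / discounted_value g \<sigma> (hprob Q))"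
    (is "_ = (SUP \<sigma>\<in>?S. ?ratio \<sigma>)")
proof -
  let ?R = "SUP \<sigma>\<in>?S. ?ratio \<sigma>"
  let ?game = "\<lambda>G \<sigma>. discounted_value g \<sigma> click_mass - G * discounted_value g \<sigma> (hprob Q)"
  have S_ne: "?S \<noteq> {}" by auto
  have bdd_game: "bdd_above (?game G ` ?S)" for G
    using bdd_above_discounted_value_diff[OF g bounded_stages_click_mass bounded_stages_hprob, of 1 G]
    by simp
  have game_eq: "?game G \<sigma> = discounted_value g \<sigma> (hprob Q) * (?ratio \<sigma> - G)" if "\<sigma> \<in> ?S" for G \<sigma>
    using discounted_value_hprob_ge_1[OF g, of \<sigma>] that by (simp add: field_simps)
  have below: "G \<le> ?R" if "0 \<le> (SUP \<sigma>\<in>?S. ?game G \<sigma>)" for G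
  proof (rule ccontr)
    assume "\<not> G \<le> ?R"
    have "?game G \<sigma> \<le> ?R - G" if "\<sigma> \<in> ?S" for \<sigma>
    proof -
      have "?ratio \<sigma> \<le> ?R"
        using that by (rule cSUP_upper[OF _ bdd_above_click_ratio[OF g]])
      have H: "1 \<le> discounted_value g \<sigma> (hprob Q)"
        using discounted_value_hprob_ge_1[OF g] that by simp
      have "?game G \<sigma> \<le> discounted_value g \<sigma> (hprob Q) * (?R - G)"
        unfolding game_eq[OF that] using \<open>?ratio \<sigma> \<le> ?R\<close> H by (intro mult_left_mono) auto
      also have "\<dots> \<le> 1 * (?R - G)"
        using H \<open>\<not> G \<le> ?R\<close> by (intro mult_right_mono_neg) auto
      finally show ?thesis by simp
    qed
    then have "(SUP \<sigma>\<in>?S. ?game G \<sigma>) \<le> ?R - G"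
      by (rule cSUP_least[OF S_ne])
    with that \<open>\<not> G \<le> ?R\<close> show False by linarith
  qed
  have above: "0 \<le> (SUP \<sigma>\<in>?S. ?game G \<sigma>)" if "G < ?R" for G
  proof -
    obtain \<sigma> where \<sigma>: "\<sigma> \<in> ?S" "G < ?ratio \<sigma>"
      using \<open>G < ?R\<close> less_cSUP_iff[OF S_ne bdd_above_click_ratio[OF g]] by blast
    then have "0 \<le> ?game G \<sigma>"
      using discounted_value_hprob_ge_1[OF g, of \<sigma>] by (simp add: game_eq)
    also have "\<dots> \<le> (SUP \<sigma>\<in>?S. ?game G \<sigma>)"
      by (rule cSUP_upper[OF \<sigma>(1) bdd_game])
    finally show ?thesis .
  qed
  show ?thesis
    unfolding gittins_def policy_value_retirement_game[OF g]
    by (rule cSup_eq_if_between_lessThan_atMost) (use below above in auto)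
qed

lemma click_ratio_le_gittins:
  "0 \<le> g \<Longrightarrow> g < 1 \<Longrightarrow> \<sigma> [] \<Longrightarrow>
   discounted_value g \<sigma> click_mass / discounted_value g \<sigma> (hprob Q) \<le> gittins g Q"
  unfolding gittins_eq_SUP_click_ratio by (rule cSUP_upper[OF _ bdd_above_click_ratio]) auto

lemma less_gittins_imp_click_ratio:
  assumes g: "0 \<le> g" "g < 1" and "G < gittins g Q"
  obtains \<sigma> where "\<sigma> []" "G < discounted_value g \<sigma> click_mass / discounted_value g \<sigma> (hprob Q)"
  using assms(3) less_cSUP_iff[OF _ bdd_above_click_ratio[OF g]]
  unfolding gittins_eq_SUP_click_ratio[OF g] by auto

lemma ctr_mean_le_gittins: "0 \<le> g \<Longrightarrow> g < 1 \<Longrightarrow> ctr_mean Q \<le> gittins g Q"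
  using click_ratio_le_gittins[of g "\<lambda>h. h = []"]
  by (simp add: discounted_value_stop_after_first hprob_Nil ctr_mean_eq_click_mass)

lemma gittins_eq_0_if_ctr_mean_eq_0:
  assumes g: "0 \<le> g" "g < 1" and "ctr_mean Q = 0"
  shows "gittins g Q = 0"
proof -
  have "click_mass h = 0" for h
    using click_mass_append_le[of "[]" h] click_mass_nonneg[of h] assms(3)
    by (simp add: ctr_mean_eq_click_mass)
  then have "click_mass = (\<lambda>_. 0)"
    by (rule ext)
  then have "discounted_value g \<sigma> click_mass = 0" for \<sigma>
    by (simp add: discounted_value_def stage_sum_def)
  moreover have "{\<sigma>::bool list \<Rightarrow> bool. \<sigma> []} \<noteq> {}"
    by auto
  ultimately show ?thesis
    by (simp add: gittins_eq_SUP_click_ratio[OF g])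
qed

section \<open>Bidding against the posterior mean\<close>

text \<open>With the posterior mean as the auctioneer's index, \<open>min 1 (p/q)\<close> is 1 unless the posterior
  mean vanishes, in which case it is \<open>min 1 (0/0) = 0\<close>.  So the charge is \<open>hprob Q h\<close> exactly on
  the histories after which a click is still possible.\<close>

definition live_mass :: "bool list \<Rightarrow> real" where
  "live_mass h = (if click_mass h = 0 then 0 else hprob Q h)"

lemma bounded_stages_live_mass: "bounded_stages live_mass"
  by (rule bounded_stages_if_le_hprob[where K = 1]) (simp add: live_mass_def hprob_nonneg)

lemma policy_value_myopic_auctioneer:
  assumes g: "0 \<le> g" "g < 1"
  shows "policy_value g (\<lambda>P. v * ctr_mean P - W * min 1 (ctr_mean P / gittins 0 P)) Q \<sigma> =
         v * discounted_value g \<sigma> click_mass - W * discounted_value g \<sigma> live_mass"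
proof -
  have "hprob Q h * (v * ctr_mean (posterior Q h) - W * min 1 (ctr_mean (posterior Q h) / gittins 0 (posterior Q h)))
        = v * click_mass h - W * live_mass h" for h
  proof (cases "hprob Q h = 0")
    case True
    then show ?thesis
      using click_mass_le_hprob[of h] click_mass_nonneg[of h] by (simp add: live_mass_def)
  next
    case False
    then have "0 < hprob Q h"
      using hprob_nonneg[of h] by linarith
    then show ?thesis
      by (simp add: gittins_zero_discount hprob_posterior_Nil ctr_mean_posterior live_mass_def field_simps)
  qed
  then show ?thesis
    using discounted_value_diff[OF g bounded_stages_click_mass bounded_stages_live_mass, of \<sigma> v W]
    by (simp add: policy_value_eq_discounted_value)
qed

text \<open>Stopping once no click is possible turns the charge \<open>live_mass\<close> into \<open>hprob Q\<close>.\<close>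

lemma live_mass_value_eq_pruned:
  "discounted_value g \<sigma> (\<lambda>h. v * click_mass h - W * live_mass h) =
   discounted_value g (\<lambda>h. \<sigma> h \<and> click_mass h \<noteq> 0) (\<lambda>h. v * click_mass h - W * hprob Q h)"
proof -
  have prefix_closed: "click_mass (take i h) \<noteq> 0" if "click_mass h \<noteq> 0" for h i
    using click_mass_append_le[of "take i h" "drop i h"] click_mass_nonneg[of h] that by simp
  have "(if plays \<sigma> h then v * click_mass h - W * live_mass h else 0) =
        (if plays (\<lambda>h. \<sigma> h \<and> click_mass h \<noteq> 0) h then v * click_mass h - W * hprob Q h else 0)" for h
    by (simp add: plays_restrict[where P = "\<lambda>h. click_mass h \<noteq> 0", OF prefix_closed] live_mass_def)
  then show ?thesis
    by (simp add: discounted_value_def stage_sum_def)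
qed

lemma SUP_live_game_pos_iff:
  assumes g: "0 \<le> g" "g < 1" and v: "0 \<le> v" and p: "0 < ctr_mean Q"
  shows "0 < (SUP \<sigma>. v * discounted_value g \<sigma> click_mass - W * discounted_value g \<sigma> live_mass)
         \<longleftrightarrow> W < v * gittins g Q"
    (is "0 < (SUP \<sigma>. ?U \<sigma>) \<longleftrightarrow> _")
proof
  have bdd: "bdd_above (range ?U)"
    by (rule bdd_above_discounted_value_diff[OF g bounded_stages_click_mass bounded_stages_live_mass])
  show "W < v * gittins g Q" if SUP_pos: "0 < (SUP \<sigma>. ?U \<sigma>)"
  proof -
    obtain \<sigma> where U_pos: "0 < ?U \<sigma>"
      using SUP_pos less_cSUP_iff[OF UNIV_not_empty bdd, of 0] by blast
    define \<sigma>' where "\<sigma>' = (\<lambda>h. \<sigma> h \<and> click_mass h \<noteq> 0)"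
    have "?U \<sigma> = discounted_value g \<sigma> (\<lambda>h. v * click_mass h - W * live_mass h)"
      by (rule discounted_value_diff[symmetric, OF g bounded_stages_click_mass bounded_stages_live_mass])
    also have "\<dots> = discounted_value g \<sigma>' (\<lambda>h. v * click_mass h - W * hprob Q h)"
      unfolding \<sigma>'_def by (rule live_mass_value_eq_pruned)
    also have "\<dots> = v * discounted_value g \<sigma>' click_mass - W * discounted_value g \<sigma>' (hprob Q)"
      by (rule discounted_value_diff[OF g bounded_stages_click_mass bounded_stages_hprob])
    finally have "?U \<sigma> = v * discounted_value g \<sigma>' click_mass - W * discounted_value g \<sigma>' (hprob Q)" .
    with U_pos have game_pos: "W * discounted_value g \<sigma>' (hprob Q) < v * discounted_value g \<sigma>' click_mass"
      by linarith
    have start: "\<sigma>' []"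
    proof (rule ccontr)
      assume "\<not> \<sigma>' []"
      then show False
        using game_pos by (simp add: discounted_value_not_started)
    qed
    have "0 < discounted_value g \<sigma>' (hprob Q)"
      using discounted_value_hprob_ge_1[OF g, of \<sigma>', OF start] by linarith
    then have "W < v * (discounted_value g \<sigma>' click_mass / discounted_value g \<sigma>' (hprob Q))"
      using game_pos by (simp add: pos_less_divide_eq)
    also have "\<dots> \<le> v * gittins g Q"
      using click_ratio_le_gittins[OF g, of \<sigma>', OF start] v by (rule mult_left_mono)
    finally show ?thesis .
  qed
  show "0 < (SUP \<sigma>. ?U \<sigma>)" if W_less: "W < v * gittins g Q"
  proof (cases "W < 0")
    case True
    have "live_mass [] = 1"
      using p by (simp add: live_mass_def hprob_Nil ctr_mean_eq_click_mass)
    moreover have "0 \<le> v * click_mass []"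
      using v click_mass_nonneg by simp
    ultimately have "0 < ?U (\<lambda>h. h = [])"
      using True by (simp add: discounted_value_stop_after_first)
    also have "\<dots> \<le> (SUP \<sigma>. ?U \<sigma>)"
      by (rule cSUP_upper[OF UNIV_I bdd])
    finally show ?thesis .
  next
    case False
    with W_less have "v \<noteq> 0"
      by auto
    with v have v_pos: "0 < v"
      by simp
    then have "W / v < gittins g Q"
      using W_less by (simp add: divide_less_eq mult.commute)
    then obtain \<sigma> where start: "\<sigma> []"
      and ratio: "W / v < discounted_value g \<sigma> click_mass / discounted_value g \<sigma> (hprob Q)"
      by (rule less_gittins_imp_click_ratio[OF g])
    have "W * discounted_value g \<sigma> live_mass \<le> W * discounted_value g \<sigma> (hprob Q)"
      using False discounted_value_mono[OF g bounded_stages_live_mass bounded_stages_hprob, of \<sigma>]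
      by (intro mult_left_mono) (auto simp: live_mass_def hprob_nonneg)
    moreover have "W * discounted_value g \<sigma> (hprob Q) < v * discounted_value g \<sigma> click_mass"
    proof -
      have "0 < discounted_value g \<sigma> (hprob Q)"
        using discounted_value_hprob_ge_1[OF g, of \<sigma>, OF start] by linarith
      then have "W / v * discounted_value g \<sigma> (hprob Q) < discounted_value g \<sigma> click_mass"
        using ratio by (simp add: pos_less_divide_eq)
      then show ?thesis
        using v_pos by (simp add: pos_divide_less_eq mult.commute)
    qed
    ultimately have "0 < ?U \<sigma>"
      by linarith
    also have "\<dots> \<le> (SUP \<sigma>. ?U \<sigma>)"
      by (rule cSUP_upper[OF UNIV_I bdd])
    finally show ?thesis .
  qed
qed

lemma bidding_W_myopic_auctioneer:
  assumes g: "0 \<le> g" "g < 1" and "0 \<le> v" and "0 < ctr_mean Q"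
  shows "bidding_W 0 g v Q = v * gittins g Q"
  unfolding bidding_W_def opt_value_def policy_value_myopic_auctioneer[OF g]
    SUP_live_game_pos_iff[OF assms]
  by (simp flip: lessThan_def)

end

theorem theorem5:
  fixes Q :: "real measure" and v \<gamma> \<gamma>a \<gamma>b :: real
  assumes "prob_space Q"
    and "sets Q = sets borel"
    and "AE \<theta> in Q. 0 \<le> \<theta> \<and> \<theta> \<le> 1"
    and "0 \<le> v"
    and "0 \<le> \<gamma>" and "\<gamma> < 1"
    and "(\<gamma>b = \<gamma> \<and> \<gamma>a = 0) \<or> (\<gamma>b = 0 \<and> \<gamma>a = \<gamma>)"
  shows "effective_bid (bidding_index_bid \<gamma>a \<gamma>b v Q) (gittins \<gamma>a Q) = v * gittins \<gamma> Q"
proof -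
  interpret ctr_prior Q
    using assms(1-3) by (intro ctr_prior.intro ctr_prior_axioms.intro)
  have g: "0 \<le> \<gamma>" "\<gamma> < 1"
    using assms(5,6) .
  have mean_le: "ctr_mean Q \<le> gittins \<gamma> Q"
    by (rule ctr_mean_le_gittins[OF g])
  consider "ctr_mean Q = 0" | "0 < ctr_mean Q"
    using click_mass_nonneg[of "[]"] ctr_mean_eq_click_mass by fastforce
  then show ?thesis
  proof cases
    case 1
    then show ?thesis
      by (simp add: effective_bid_bidding_index_bid_zero_mean gittins_eq_0_if_ctr_mean_eq_0[OF g])
  next
    case 2
    from assms(7) have "ctr_mean Q \<le> gittins \<gamma>a Q \<and> bidding_W \<gamma>a \<gamma>b v Q = v * gittins \<gamma> Q"
    proof
      assume "\<gamma>b = \<gamma> \<and> \<gamma>a = 0"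
      then show ?thesis
        using bidding_W_myopic_auctioneer[OF g assms(4) 2] gittins_zero_discount[OF hprob_Nil] by simp
    next
      assume "\<gamma>b = 0 \<and> \<gamma>a = \<gamma>"
      then show ?thesis
        using bidding_W_myopic_bidder[OF hprob_Nil 2 mean_le] mean_le by simp
    qed
    moreover have "0 \<le> v * gittins \<gamma> Q"
      using assms(4) 2 mean_le by simp
    ultimately show ?thesis
      using effective_bid_bidding_index_bid[OF 2] by simp
  qed
qed

end
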